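(* Let $N\ge1$, $c_1,c_2\in\mathbb{R}$ with $2Nc_1\in\mathbb{Z}$, and let integers $\tilde k,\tilde l$ be given; set $\tilde m=\tilde k-2Nc_1\tilde l$. For $\bar m=0,\dots,N-1$ define $$\mathcal{E}(\bar m,\tilde m)=e^{j\frac{2\pi}{N}\left(\bar m\tilde l+Nc_2\left((\bar m+\tilde m)_N^2-\bar m^2\right)\right)},\quad \mathbf{P}=\operatorname{diag}\big(\mathcal{E}^*(\bar m,\tilde m),\ \bar m=0,\dots,N-1\big),$$ and the MD-CDDS-AFDM precoder $\mathbf{C}=\boldsymbol{\Pi}_N^{\tilde m}\mathbf{P}$. For $\mathbf{x}\in\mathbb{C}^N$ let $\mathbf{x}'=\mathbf{C}\mathbf{x}$. For integer paths $(k_i,l_i)$ and gains $h_i$, $i=1,\dots,P$, define the (noise-free) AFDM output $$y[m]=\sum_{i=1}^P h_i e^{j\frac{2\pi}{N}\left(Nc_1l_i^2-m'_il_i+Nc_2(m_i'^2-m^2)\right)}x'[m'_i],\quad m'_i=(m+\operatorname{ind}_i)_N,\ \operatorname{ind}_i=(2Nc_1l_i-k_i)_N.$$ Then for every $m=0,\dots,N-1$, $$y[m]=\sum_{i=1}^P \bar h_i\, e^{j\frac{2\pi}{N}\left(Nc_1\bar l_i^2-\bar m_i\bar l_i+Nc_2(\bar m_i^2-m^2)\right)}x[\bar m_i],\qquad \bar m_i=(m+\overline{\operatorname{ind}}_i)_N,$$ where $\bar k_i=k_i+\tilde k$, $\bar l_i=l_i+\tilde l$, $\overline{\operatorname{ind}}_i=(2Nc_1\bar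 l_i-\bar k_i)_N$, and $\bar h_i=h_i\,e^{-j\frac{2\pi}{N}\left(Nc_1(2l_i\tilde l+\tilde l^2)+\tilde m l_i\right)}$. In particular, MD-CDDS in AFDM is equivalent to shifting every path by $(\tilde k,\tilde l)$ in the AFDM input-output relation, with a unit-modulus gain change that does not depend on the symbol index.
   Context: $\boldsymbol{\Pi}_N$ is the $N\times N$ forward cyclic-shift matrix, $(\boldsymbol{\Pi}_N\mathbf{v})[n]=v[(n-1)_N]$ (for negative exponents, its inverse powers); $(\cdot)_N$ denotes reduction modulo $N$ into $\{0,\dots,N-1\}$; $^*$ denotes complex conjugation. The displayed formula for $y[m]$ is the discrete affine Fourier transform (DAFT) domain input-output relation of AFDM with chirp parameters $c_1,c_2$ over a doubly selective channel with integer normalized delays $l_i$ and Doppler shifts $k_i$. *)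

theory Defs
  imports "HOL-Analysis.Analysis"
begin

text \<open>Vectors in C^N are modelled as functions nat => complex; only the entries
  with index 0..N-1 are meaningful. (a)_N is reduction modulo N into {0..N-1}.\<close>

definition modN :: "nat \<Rightarrow> int \<Rightarrow> nat" where
  "modN N a = nat (a mod int N)"

definition cshift :: "nat \<Rightarrow> (nat \<Rightarrow> complex) \<Rightarrow> (nat \<Rightarrow> complex)" where
  "cshift N v = (\<lambda>n. v (modN N (int n - 1)))"

definition cshift_inv :: "nat \<Rightarrow> (nat \<Rightarrow> complex) \<Rightarrow> (nat \<Rightarrow> complex)" where
  "cshift_inv N v = (\<lambda>n. v (modN N (int n + 1)))"

definition Pi_pow :: "nat \<Rightarrow> int \<Rightarrow> (nat \<Rightarrow> complex) \<Rightarrow> (nat \<Rightarrow> complex)" where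
  "Pi_pow N s = (if 0 \<le> s then cshift N ^^ nat s else cshift_inv N ^^ nat (- s))"

text \<open>The integer 2 N c1 (assumed to be an integer in the theorem).\<close>
definition twoNc1 :: "nat \<Rightarrow> real \<Rightarrow> int" where
  "twoNc1 N c1 = \<lfloor>2 * real N * c1\<rfloor>"

definition mtil :: "nat \<Rightarrow> real \<Rightarrow> int \<Rightarrow> int \<Rightarrow> int" where
  "mtil N c1 kt lt = kt - twoNc1 N c1 * lt"

definition calE :: "nat \<Rightarrow> real \<Rightarrow> int \<Rightarrow> nat \<Rightarrow> int \<Rightarrow> complex" where
  "calE N c2 lt mb mt =
     exp (\<i> * of_real (2 * pi / real N *
        (real mb * real_of_int lt + real N * c2 * (real (modN N (int mb + mt)) ^ 2 - real mb ^ 2))))"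

definition precP :: "nat \<Rightarrow> real \<Rightarrow> real \<Rightarrow> int \<Rightarrow> int \<Rightarrow> (nat \<Rightarrow> complex) \<Rightarrow> (nat \<Rightarrow> complex)" where
  "precP N c1 c2 kt lt x = (\<lambda>mb. cnj (calE N c2 lt mb (mtil N c1 kt lt)) * x mb)"

definition precC :: "nat \<Rightarrow> real \<Rightarrow> real \<Rightarrow> int \<Rightarrow> int \<Rightarrow> (nat \<Rightarrow> complex) \<Rightarrow> (nat \<Rightarrow> complex)" where
  "precC N c1 c2 kt lt x = Pi_pow N (mtil N c1 kt lt) (precP N c1 c2 kt lt x)"

text \<open>Noise-free AFDM DAFT-domain output for paths i = 1..Pn with gains h i,
  Doppler k i, delay l i, input vector x.\<close>
definition afdm_out :: "nat \<Rightarrow> real \<Rightarrow> real \<Rightarrow> nat \<Rightarrow> (nat \<Rightarrow> complex) \<Rightarrow> (nat \<Rightarrow> int)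
    \<Rightarrow> (nat \<Rightarrow> int) \<Rightarrow> (nat \<Rightarrow> complex) \<Rightarrow> nat \<Rightarrow> complex" where
  "afdm_out N c1 c2 Pn h k l x m =
     (\<Sum>i\<in>{1..Pn}.
        let ind = modN N (twoNc1 N c1 * l i - k i);
            m' = modN N (int m + int ind)
        in h i * exp (\<i> * of_real (2 * pi / real N *
             (real N * c1 * real_of_int (l i) ^ 2 - real m' * real_of_int (l i)
              + real N * c2 * (real m' ^ 2 - real m ^ 2)))) * x m')"

end

(* The precoder moves x[mb] to position (mb + m~)_N, multiplied by E^*(mb, m~). Path (k, l)
   reads x' at m' = (m + 2Nc1 l - k)_N, hence reads x at (m' - m~)_N, which is exactly the index
   read by the shifted path (k + k~, l + l~), because 2Nc1 l~ - k~ = -m~. The c2-chirp of the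
   path and of E telescope, and the remaining linear phases differ by l times a multiple of N,
   which e^(j 2pi/N .) does not see. *)

theory Submission
  imports Defs
begin

lemma int_modN: "0 < N \<Longrightarrow> int (modN N a) = a mod int N"
  unfolding modN_def by simp

lemma modN_less: "0 < N \<Longrightarrow> modN N a < N"
  unfolding modN_def by (simp add: nat_less_iff)

lemma modN_eq_iff: "0 < N \<Longrightarrow> modN N a = modN N b \<longleftrightarrow> a mod int N = b mod int N"
  by (metis int_modN of_nat_eq_iff)

lemma modN_of_nat: "n < N \<Longrightarrow> modN N (int n) = n"
  unfolding modN_def by simp

lemma modN_add_modN: "0 < N \<Longrightarrow> modN N (int (modN N a) + b) = modN N (a + b)"
  by (simp add: modN_eq_iff int_modN mod_add_left_eq)

lemma modN_diff_modN: "0 < N \<Longrightarrow> modN N (int (modN N a) - b) = modN N (a - b)"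
  by (simp add: modN_eq_iff int_modN mod_diff_left_eq)

lemma cshift_pow_apply:
  "0 < N \<Longrightarrow> n < N \<Longrightarrow> (cshift N ^^ j) v n = v (modN N (int n - int j))"
proof (induction j arbitrary: n)
  case 0
  then show ?case by (simp add: modN_of_nat)
next
  case (Suc j)
  have "(cshift N ^^ Suc j) v n = (cshift N ^^ j) v (modN N (int n - 1))"
    by (simp add: cshift_def)
  also have "\<dots> = v (modN N (int (modN N (int n - 1)) - int j))"
    using Suc by (simp add: modN_less)
  finally show ?case
    using Suc.prems by (simp add: modN_diff_modN algebra_simps)
qed

lemma cshift_inv_pow_apply:
  "0 < N \<Longrightarrow> n < N \<Longrightarrow> (cshift_inv N ^^ j) v n = v (modN N (int n + int j))"
proof (induction j arbitrary: n)
  case 0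
  then show ?case by (simp add: modN_of_nat)
next
  case (Suc j)
  have "(cshift_inv N ^^ Suc j) v n = (cshift_inv N ^^ j) v (modN N (int n + 1))"
    by (simp add: cshift_inv_def)
  also have "\<dots> = v (modN N (int (modN N (int n + 1)) + int j))"
    using Suc by (simp add: modN_less)
  finally show ?case
    using Suc.prems by (simp add: modN_add_modN add.assoc)
qed

lemma Pi_pow_apply: "0 < N \<Longrightarrow> n < N \<Longrightarrow> Pi_pow N s v n = v (modN N (int n - s))"
  by (simp add: Pi_pow_def cshift_pow_apply cshift_inv_pow_apply)

lemma precC_apply:
  assumes "0 < N" and "n < N"
  shows "precC N c1 c2 kt lt x n =
    cnj (calE N c2 lt (modN N (int n - mtil N c1 kt lt)) (mtil N c1 kt lt))
      * x (modN N (int n - mtil N c1 kt lt))"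
  using assms by (simp add: precC_def precP_def Pi_pow_apply)

definition path_index :: "nat \<Rightarrow> real \<Rightarrow> int \<Rightarrow> int \<Rightarrow> nat \<Rightarrow> nat" where
  "path_index N c1 k l m = modN N (int m + int (modN N (twoNc1 N c1 * l - k)))"

definition path_response :: "nat \<Rightarrow> real \<Rightarrow> real \<Rightarrow> complex \<Rightarrow> int \<Rightarrow> int
    \<Rightarrow> (nat \<Rightarrow> complex) \<Rightarrow> nat \<Rightarrow> complex" where
  "path_response N c1 c2 g k l x m =
     (let m' = path_index N c1 k l m
      in g * exp (\<i> * of_real (2 * pi / real N *
           (real N * c1 * real_of_int l ^ 2 - real m' * real_of_int l
            + real N * c2 * (real m' ^ 2 - real m ^ 2)))) * x m')"

lemma afdm_out_eq_sum_path_response: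
  "afdm_out N c1 c2 Pn h k l x m = (\<Sum>i\<in>{1..Pn}. path_response N c1 c2 (h i) (k i) (l i) x m)"
  by (simp add: afdm_out_def path_response_def path_index_def)

lemma path_index_less: "0 < N \<Longrightarrow> path_index N c1 k l m < N"
  by (simp add: path_index_def modN_less)

lemma path_index_shift:
  assumes "0 < N"
  shows "path_index N c1 (k + kt) (l + lt) m
       = modN N (int (path_index N c1 k l m) - mtil N c1 kt lt)"
proof -
  define a where "a = twoNc1 N c1"
  have "int m + a * (l + lt) - (k + kt) = (int m + a * l - k) - mtil N c1 kt lt"
    by (simp add: a_def mtil_def algebra_simps)
  then have "(int m + a * (l + lt) - (k + kt)) mod int N
      = ((int m + a * l - k) mod int N - mtil N c1 kt lt) mod int N"
    by (simp only: mod_diff_left_eq)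
  with assms show ?thesis
    by (simp add: path_index_def modN_eq_iff int_modN mod_add_right_eq a_def add_diff_eq)
qed

lemma exp_phase_add_multiple:
  assumes "0 < N"
  shows "exp (\<i> * of_real (2 * pi / real N * (B + real N * of_int q)))
       = exp (\<i> * of_real (2 * pi / real N * B))"
proof -
  have "\<i> * of_real (2 * pi / real N * (B + real N * of_int q))
      = \<i> * of_real (2 * pi / real N * B) + 2 * of_int q * pi * \<i>"
    using assms by (simp add: field_simps)
  then show ?thesis by (simp add: exp_eq)
qed

lemma exp_mult_exp_minus_real:
  "exp (\<i> * of_real a) * exp (- (\<i> * of_real b)) = exp (\<i> * of_real (a - b))"
  by (simp add: mult_exp_exp right_diff_distrib)

definition md_cdds_gain :: "nat \<Rightarrow> real \<Rightarrow> int \<Rightarrow> int \<Rightarrow> int \<Rightarrow> complex" where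
  "md_cdds_gain N c1 kt lt l =
     exp (- \<i> * of_real (2 * pi / real N *
       (real N * c1 * (2 * real_of_int l * real_of_int lt + real_of_int lt ^ 2)
        + real_of_int (mtil N c1 kt lt) * real_of_int l)))"

lemma path_response_precC:
  assumes "0 < N"
  shows "path_response N c1 c2 g k l (precC N c1 c2 kt lt x) m
       = path_response N c1 c2 (g * md_cdds_gain N c1 kt lt l) (k + kt) (l + lt) x m"
proof -
  define m' where "m' = path_index N c1 k l m"
  define mt where "mt = mtil N c1 kt lt"
  define mb where "mb = modN N (int m' - mt)"
  define q where "q = (int m' - mt) div int N"
  define L where "L = real_of_int l"
  define T where "T = real_of_int lt"
  define A where "A = real N * c1 * L ^ 2 - real m' * L + real N * c2 * (real m' ^ 2 - real m ^ 2)"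
  define B where "B = real mb * T + real N * c2 * (real m' ^ 2 - real mb ^ 2)"
  define C where "C = real N * c1 * (2 * L * T + T ^ 2) + real_of_int mt * L"
  define D where "D = real N * c1 * (L + T) ^ 2 - real mb * (L + T) + real N * c2 * (real mb ^ 2 - real m ^ 2)"
  have m'_less: "m' < N"
    using assms by (simp add: m'_def path_index_less)
  have mb_add: "modN N (int mb + mt) = m'"
    using assms m'_less by (simp add: mb_def modN_add_modN modN_of_nat)
  have "int mb = int m' - mt - int N * q"
    using assms by (simp add: mb_def q_def int_modN minus_mult_div_eq_mod)
  then have "real m' = real mb + real_of_int mt + real N * of_int q"
    by (simp add: of_int_eq_iff[symmetric, where 'a = real])
  then have phase: "A - B = (D - C) + real N * of_int (- q * l)"
    unfolding A_def B_def C_def D_def L_def T_def by (simp add: algebra_simps power2_eq_square)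
  have "path_response N c1 c2 g k l (precC N c1 c2 kt lt x) m
      = g * exp (\<i> * of_real (2 * pi / real N * A)) * exp (- (\<i> * of_real (2 * pi / real N * B))) * x mb"
    using assms m'_less mb_add
    by (simp add: path_response_def precC_apply calE_def exp_cnj A_def B_def L_def T_def
        m'_def [symmetric] mt_def [symmetric] mb_def [symmetric])
  also have "\<dots> = g * exp (\<i> * of_real (2 * pi / real N * (A - B))) * x mb"
    by (simp only: mult.assoc exp_mult_exp_minus_real right_diff_distrib)
  also have "\<dots> = g * exp (\<i> * of_real (2 * pi / real N * (D - C))) * x mb"
    unfolding phase using assms by (simp only: exp_phase_add_multiple)
  also have "\<dots> = g * exp (- (\<i> * of_real (2 * pi / real N * C))) * exp (\<i> * of_real (2 * pi / real N * D)) * x mb"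
    by (simp only: mult.assoc mult.commute [of "exp (- _)"] exp_mult_exp_minus_real right_diff_distrib)
  also have "\<dots> = path_response N c1 c2 (g * md_cdds_gain N c1 kt lt l) (k + kt) (l + lt) x m"
    using assms
    by (simp add: path_response_def md_cdds_gain_def path_index_shift C_def D_def L_def T_def
        m'_def [symmetric] mt_def [symmetric] mb_def [symmetric])
  finally show ?thesis .
qed

theorem mainTheorem4:
  fixes N :: nat and c1 c2 :: real and kt lt :: int
    and Pn :: nat and h :: "nat \<Rightarrow> complex" and k l :: "nat \<Rightarrow> int"
    and x :: "nat \<Rightarrow> complex" and m :: nat
  assumes "N \<ge> 1"
    and "2 * real N * c1 \<in> \<int>"
    and "m < N"
  shows "afdm_out N c1 c2 Pn h k l (precC N c1 c2 kt lt x) m =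
         afdm_out N c1 c2 Pn
           (\<lambda>i. h i * exp (- \<i> * of_real (2 * pi / real N *
                 (real N * c1 * (2 * real_of_int (l i) * real_of_int lt + real_of_int lt ^ 2)
                  + real_of_int (mtil N c1 kt lt) * real_of_int (l i)))))
           (\<lambda>i. k i + kt) (\<lambda>i. l i + lt) x m"
proof -
  have "0 < N" using assms(1) by simp
  then show ?thesis
    unfolding afdm_out_eq_sum_path_response md_cdds_gain_def [symmetric]
    by (simp add: path_response_precC)
qed

end
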